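(* For every $\alpha>\sqrt{1/3}$, there is no voting rule $f$ (assigning an alternative to every preference profile, for every number of voters $n$ and alternatives $m$, and not depending on the utility distribution) such that for all $n,m$ and every symmetric distribution $\mathcal{D}$ supported on $[0,1]$, every preference profile $\sigma$ satisfies $\mathbb{E}_{\mathcal{D}}[\mathrm{sw}(f(\sigma),u)]\ge\alpha\max_{j\in A}\mathbb{E}_{\mathcal{D}}[\mathrm{sw}(j,u)]$.
   Context: There are $n$ voters and $m$ alternatives $A=\{1,\dots,m\}$. A preference profile $\sigma$ consists of a ranking of $A$ for each voter. Given a distribution $\mathcal{D}$ and profile $\sigma$, a random utility profile $u$ consistent with $\sigma$ is generated as follows: independently for each voter $i$, draw $m$ i.i.d. samples from $\mathcal{D}$ and assign them, from highest to lowest, to the alternatives in the order of voter $i$'s ranking. The social welfare of $j$ is $\mathrm{sw}(j,u)=\sum_i u_{ij}$; $\mathbb{E}_{\mathcal{D}}$ is expectation over $u$ generated with $\mathcal{D}$. A distribution $\mathcal{D}$ on $[0,1]$ is symmetric if $\Pr_{x\sim\mathcal{D}}(x\le\frac12-\epsilon)=\Pr_{x\sim\mathcal{D}}(x\ge\frac12+\epsilon)$ for all $\epsilon\in[0,\frac12]$. *)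

theory Defs
  imports "HOL-Probability.Probability"
begin

text \<open>Alternatives are 0..<m. A preference profile for m alternatives is a list of
rankings (one per voter, so n = length of the list); each ranking lists all
alternatives exactly once, best first.\<close>

definition valid_profile :: "nat \<Rightarrow> nat list list \<Rightarrow> bool" where
  "valid_profile m \<sigma> \<longleftrightarrow> (\<forall>r \<in> set \<sigma>. distinct r \<and> set r = {..<m})"

definition rank_pos :: "nat list \<Rightarrow> nat \<Rightarrow> nat" where
  "rank_pos r j = (THE k. k < length r \<and> r ! k = j)"

text \<open>Random utility profile: the samples are s (i,k) for voter i < n and k < m,
i.i.d. from D. Voter i's samples are sorted from highest to lowest and assigned to
the alternatives in the order of voter i's ranking.\<close>
definition utility :: "nat \<Rightarrow> nat list list \<Rightarrow> (nat \<times> nat \<Rightarrow> real) \<Rightarrow> nat \<Rightarrow> nat \<Rightarrow> real" where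
  "utility m \<sigma> s i j = rev (sort (map (\<lambda>k. s (i, k)) [0..<m])) ! rank_pos (\<sigma> ! i) j"

definition sw :: "nat \<Rightarrow> nat list list \<Rightarrow> (nat \<times> nat \<Rightarrow> real) \<Rightarrow> nat \<Rightarrow> real" where
  "sw m \<sigma> s j = (\<Sum>i<length \<sigma>. utility m \<sigma> s i j)"

definition exp_sw :: "real measure \<Rightarrow> nat \<Rightarrow> nat list list \<Rightarrow> nat \<Rightarrow> real" where
  "exp_sw D m \<sigma> j = (\<integral>s. sw m \<sigma> s j \<partial>(PiM ({..<length \<sigma>} \<times> {..<m}) (\<lambda>_. D)))"

definition symmetric_dist :: "real measure \<Rightarrow> bool" where
  "symmetric_dist D \<longleftrightarrow> prob_space D \<and> sets D = sets borel \<and>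
     (AE x in D. x \<in> {0..1}) \<and>
     (\<forall>\<epsilon>\<in>{0..1/2}. measure D {x. x \<le> 1/2 - \<epsilon>} = measure D {x. x \<ge> 1/2 + \<epsilon>})"

end

(* On m = T^5 alternatives take the profile in which the m - 2 dummy alternatives rotate
   through the free positions and the voters form three groups, of sizes 2d - e, e - d and d,
   ranking alternative 0 last, at position K, at position K and alternative 1 first, first, at
   position m - 1 - K respectively, where K = T^2 - 1.  Utilities are order statistics of the
   symmetric three-point distribution with mass p at 0 and at 1.  For p = T^-4 the top position
   is worth about 1, the bottom one about 0 and the positions K and m - 1 - K about 1/2, so,
   divided by the cycle length m - 2, the welfare of 0 is about e/2 and that of 1 about 3d/2.
   For p = 1/2 (a fair coin) position K is worth about 1 and position m - 1 - K about 0, so the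
   welfare of 0 is about e while 1 and every dummy get at most about d.  When alpha^2 > 1/3 one
   can pick d < alpha e and e < 3 alpha d, and then every choice of the rule misses the factor
   alpha under one of the two distributions. *)

theory Submission
  imports Defs
begin

section \<open>Order statistics\<close>

lemma nth_rev_sort_ge_iff:
  fixes xs :: "'a::linorder list"
  assumes k: "k < length xs"
  shows "t \<le> rev (sort xs) ! k \<longleftrightarrow> k < length (filter (\<lambda>x. t \<le> x) xs)"
proof -
  define zs where "zs = sort xs"
  define n where "n = length xs"
  have zs: "length zs = n" "sorted zs" by (simp_all add: zs_def n_def)
  have rev_nth_zs: "rev zs ! k = zs ! (n - 1 - k)"
    using k zs by (simp add: rev_nth n_def)
  have count: "length (filter (\<lambda>x. t \<le> x) xs) = card {i. i < n \<and> t \<le> zs ! i}"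
    by (metis (no_types) length_filter_conv_card mset_filter mset_sort size_mset zs(1) zs_def)
  show ?thesis
  proof (cases "t \<le> zs ! (n - 1 - k)")
    case True
    have "{n-1-k..<n} \<subseteq> {i. i < n \<and> t \<le> zs ! i}"
      using True zs order_trans sorted_nth_mono by fastforce
    then have "card {n-1-k..<n} \<le> card {i. i < n \<and> t \<le> zs ! i}" by (intro card_mono) auto
    then show ?thesis using True k rev_nth_zs count by (simp add: zs_def n_def)
  next
    case False
    have "{i. i < n \<and> t \<le> zs ! i} \<subseteq> {n-k..<n}"
    proof
      fix i assume i: "i \<in> {i. i < n \<and> t \<le> zs ! i}"
      have "\<not> i \<le> n - 1 - k"
      proof
        assume "i \<le> n - 1 - k"
        then have "zs ! i \<le> zs ! (n - 1 - k)" using zs k n_def by (intro sorted_nth_mono) auto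
        then show False using False i by (auto intro: order_trans)
      qed
      then show "i \<in> {n-k..<n}" using i by auto
    qed
    then have "card {i. i < n \<and> t \<le> zs ! i} \<le> card {n-k..<n}" by (intro card_mono) auto
    then show ?thesis using False k rev_nth_zs count by (simp add: zs_def n_def)
  qed
qed

definition kth_largest :: "nat \<Rightarrow> nat \<Rightarrow> (nat \<Rightarrow> real) \<Rightarrow> real" where
  "kth_largest m k t = rev (sort (map t [0..<m])) ! k"

definition count_ge :: "nat \<Rightarrow> real \<Rightarrow> (nat \<Rightarrow> real) \<Rightarrow> nat" where
  "count_ge m c t = card {j. j < m \<and> c \<le> t j}"

lemma kth_largest_ge_iff: "k < m \<Longrightarrow> c \<le> kth_largest m k t \<longleftrightarrow> k < count_ge m c t"
proof -
  have "{i. i < m \<and> c \<le> map t [0..<m] ! i} = {j. j < m \<and> c \<le> t j}" by auto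
  then show "k < m \<Longrightarrow> ?thesis"
    unfolding kth_largest_def count_ge_def by (subst nth_rev_sort_ge_iff) (auto simp: length_filter_conv_card)
qed

lemma kth_largest_mem: "k < m \<Longrightarrow> kth_largest m k t \<in> t ` {..<m}"
proof -
  assume "k < m"
  then have "kth_largest m k t \<in> set (rev (sort (map t [0..<m])))"
    unfolding kth_largest_def by (intro nth_mem) simp
  then show ?thesis by auto
qed

lemma count_ge_le: "count_ge m c t \<le> m"
  unfolding count_ge_def by (rule order.trans[OF card_mono[of "{..<m}"]]) auto

lemma count_ge_eq_sum: "real (count_ge m c t) = (\<Sum>j<m. of_bool (c \<le> t j))"
  by (simp add: count_ge_def Int_def conj_commute lessThan_def)

lemma count_ge_add_count_less: "count_ge m c t + card {j. j < m \<and> t j < c} = m"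
proof -
  have "count_ge m c t + card {j. j < m \<and> t j < c} =
      card ({j. j < m \<and> c \<le> t j} \<union> {j. j < m \<and> t j < c})"
    unfolding count_ge_def by (rule card_Un_disjoint[symmetric]) auto
  also have "{j. j < m \<and> c \<le> t j} \<union> {j. j < m \<and> t j < c} = {..<m}" by auto
  finally show ?thesis by simp
qed

lemma card_ge_blocks:
  assumes "\<And>b. b < K \<Longrightarrow> \<exists>j\<in>{b*L..<b*L+L}. P j"
  shows "K \<le> card {j. j < K*L \<and> P j}"
proof -
  obtain g where g: "\<And>b. b < K \<Longrightarrow> g b \<in> {b*L..<b*L+L} \<and> P (g b)"
    using assms by metis
  have g_div: "g b div L = b" if "b < K" for b
    using g[OF that] by (intro div_nat_eqI) (auto simp: algebra_simps)
  have "g b < K*L" if "b < K" for b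
  proof -
    have "b*L + L \<le> K*L" using that mult_le_mono1[of "Suc b" K L] by simp
    then show ?thesis using g[OF that] by simp
  qed
  then have "g ` {..<K} \<subseteq> {j. j < K*L \<and> P j}" using g by auto
  moreover have "inj_on g {..<K}" using g_div by (intro inj_on_inverseI[where g="\<lambda>j. j div L"]) auto
  ultimately show ?thesis
    using card_mono[of "{j. j < K*L \<and> P j}" "g ` {..<K}"] card_image by fastforce
qed

lemma block_subset: "(b::nat) < K \<Longrightarrow> {b*L..<b*L+L} \<subseteq> {..<K*L}"
  using mult_le_mono1[of "Suc b" K L] by auto

lemma kth_largest_of_three_values:
  assumes "k < m" "\<forall>j<m. t j \<in> {0, 1/2, 1}"
  shows "kth_largest m k t = of_bool (k < count_ge m (1/2) t) / 2 + of_bool (k < count_ge m 1 t) / 2"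
proof -
  have "kth_largest m k t \<in> {0, 1/2, 1}" using kth_largest_mem[OF assms(1), of t] assms(2) by auto
  then show ?thesis
    using kth_largest_ge_iff[OF assms(1), of "1/2" t] kth_largest_ge_iff[OF assms(1), of 1 t] by auto
qed

lemma kth_largest_le_half_plus_count:
  assumes "k < m" "\<forall>j<m. t j \<in> {0, 1/2, 1}"
  shows "kth_largest m k t \<le> 1/2 + count_ge m 1 t / (2 * (real k + 1))"
proof -
  have "of_bool (k < count_ge m 1 t) \<le> count_ge m 1 t / (real k + 1)" by auto
  then show ?thesis unfolding kth_largest_of_three_values[OF assms] by (auto simp: field_simps)
qed

lemma kth_largest_ge_half_minus_count:
  assumes "k < m" "\<forall>j<m. t j \<in> {0, 1/2, 1}"
  shows "1/2 - (real m - count_ge m (1/2) t) / (2 * (real k + 1)) \<le> kth_largest m (m-1-k) t"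
proof -
  have "1/2 - (real m - count_ge m (1/2) t) / (2 * (real k + 1)) =
      (1 - (real m - count_ge m (1/2) t) / (real k + 1)) / 2"
    by (simp add: field_simps)
  also have "\<dots> \<le> of_bool (m-1-k < count_ge m (1/2) t) / 2"
    using assms(1) count_ge_le[of m "1/2" t] by (auto simp: field_simps)
  also have "\<dots> \<le> kth_largest m (m-1-k) t"
    using kth_largest_of_three_values[of "m-1-k" m t] assms by simp
  finally show ?thesis .
qed

lemma measurable_count_ge:
  assumes "sets D = sets borel"
  shows "(\<lambda>t. real (count_ge m c t)) \<in> borel_measurable (PiM {..<m} (\<lambda>_. D))"
  unfolding count_ge_eq_sum
proof (intro borel_measurable_sum)
  fix j :: nat assume "j \<in> {..<m}"
  then have "(\<lambda>t. t j) \<in> borel_measurable (PiM {..<m} (\<lambda>_. D))"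
    using measurable_component_singleton[of j "{..<m}" "\<lambda>_. D"] assms by (simp add: measurable_def)
  then show "(\<lambda>t. of_bool (c \<le> t j) :: real) \<in> borel_measurable (PiM {..<m} (\<lambda>_. D))"
    by measurable
qed

lemma measurable_kth_largest:
  assumes "sets D = sets borel" "k < m"
  shows "kth_largest m k \<in> borel_measurable (PiM {..<m} (\<lambda>_. D))"
proof (subst borel_measurable_iff_ge, intro allI)
  fix c
  have "{t \<in> space (PiM {..<m} (\<lambda>_. D)). c \<le> kth_largest m k t} =
      {t \<in> space (PiM {..<m} (\<lambda>_. D)). real k < real (count_ge m c t)}"
    using kth_largest_ge_iff[OF assms(2)] by auto
  also have "\<dots> \<in> sets (PiM {..<m} (\<lambda>_. D))"
    using measurable_count_ge[OF assms(1), of m c] by measurable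
  finally show "{t \<in> space (PiM {..<m} (\<lambda>_. D)). c \<le> kth_largest m k t} \<in> sets (PiM {..<m} (\<lambda>_. D))" .
qed

section \<open>Samples from the three-point distribution\<close>

lemma measure_PiM_cylinder:
  fixes D :: "real measure"
  assumes D: "prob_space D" "space D = UNIV" and C: "C \<subseteq> I" "finite I" and A: "A \<in> sets D"
  shows "measure (PiM I (\<lambda>_. D)) {t \<in> space (PiM I (\<lambda>_. D)). \<forall>k\<in>C. t k \<in> A} = measure D A ^ card C"
proof -
  interpret D: prob_space D by (rule D(1))
  define A' where "A' k = (if k \<in> C then A else UNIV)" for k
  have A': "A' k \<in> sets D" for k
    using A D by (auto simp: A'_def sets.top[of D, simplified D])
  have "{t \<in> space (PiM I (\<lambda>_. D)). \<forall>k\<in>C. t k \<in> A} = prod_emb I (\<lambda>_. D) I (Pi\<^sub>E I A')"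
    using C by (auto simp: prod_emb_def space_PiM PiE_iff A'_def extensional_def subset_iff) metis
  then have "emeasure (PiM I (\<lambda>_. D)) {t \<in> space (PiM I (\<lambda>_. D)). \<forall>k\<in>C. t k \<in> A} =
      (\<Prod>i\<in>I. emeasure D (A' i))"
    using C(2) A' by (simp add: emeasure_PiM_emb D.prob_space_axioms)
  also have "\<dots> = (\<Prod>i\<in>I. if i \<in> C then emeasure D A else 1)"
    using D by (intro prod.cong) (auto simp: A'_def prob_space.emeasure_space_1[of D, simplified D])
  also have "\<dots> = ennreal (measure D A ^ card C)"
    using C by (simp add: prod.If_cases Int_absorb1 D.emeasure_eq_measure ennreal_power)
  finally show ?thesis
    by (simp add: measure_def)
qed

lemma (in prob_space) expectation_ge_one_minus_prob:
  assumes "integrable M X" "A \<in> events"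
    and "AE x in M. 0 \<le> X x" "AE x in M. x \<notin> A \<longrightarrow> 1 \<le> X x"
  shows "1 - prob A \<le> expectation X"
proof -
  have "expectation (indicator (space M - A)) \<le> expectation X"
    using assms by (intro integral_mono_AE) (auto elim!: eventually_mono simp: indicator_def emeasure_eq_measure)
  then show ?thesis
    using assms(2) by (simp add: prob_compl)
qed

lemma (in prob_space) expectation_le_prob:
  assumes "integrable M X" "A \<in> events"
    and "AE x in M. X x \<le> 1" "AE x in M. x \<notin> A \<longrightarrow> X x \<le> 0"
  shows "expectation X \<le> prob A"
proof -
  have "expectation X \<le> expectation (indicator A)"
    using assms by (intro integral_mono_AE) (auto elim!: eventually_mono simp: indicator_def emeasure_eq_measure)
  then show ?thesis
    using assms(2) by simp
qed

definition three_point :: "real \<Rightarrow> real measure" where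
  "three_point p = distr (measure_pmf (pmf_of_list [(0, p), (1/2, 1 - 2*p), (1, p)])) borel (\<lambda>x. x)"

lemma sets_three_point [simp, measurable_cong]: "sets (three_point p) = sets borel"
  and space_three_point [simp]: "space (three_point p) = UNIV"
  by (simp_all add: three_point_def)

lemma prob_space_three_point: "prob_space (three_point p)"
  unfolding three_point_def
  by (intro prob_space.prob_space_distr) (auto simp: measure_pmf.prob_space_axioms)

abbreviation samples :: "nat \<Rightarrow> real \<Rightarrow> (nat \<Rightarrow> real) measure" where
  "samples m p \<equiv> PiM {..<m} (\<lambda>_. three_point p)"

definition order_stat_mean :: "nat \<Rightarrow> real \<Rightarrow> nat \<Rightarrow> real" where
  "order_stat_mean m p k = (\<integral>t. kth_largest m k t \<partial>samples m p)"

lemma prob_space_samples: "prob_space (samples m p)"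
  by (intro prob_space_PiM prob_space_three_point)

lemma rank_pos_nth: "distinct r \<Longrightarrow> k < length r \<Longrightarrow> rank_pos r (r ! k) = k"
  unfolding rank_pos_def by (rule the_equality) (auto simp: nth_eq_iff_index_eq)

lemma rank_pos_in_set:
  assumes "distinct r" "j \<in> set r"
  shows "rank_pos r j < length r" "r ! rank_pos r j = j"
proof -
  obtain k where "k < length r" "r ! k = j" using assms(2) by (auto simp: in_set_conv_nth)
  then show "rank_pos r j < length r" "r ! rank_pos r j = j" using rank_pos_nth[OF assms(1)] by auto
qed

context
  fixes p :: real
  assumes p: "0 \<le> p" "p \<le> 1/2"
begin

lemma pmf_of_list_wf_three_point: "pmf_of_list_wf [(0, p), (1/2, 1 - 2*p), (1::real, p)]"
  using p by (intro pmf_of_list_wfI) auto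

lemma measure_three_point:
  assumes "A \<in> sets borel"
  shows "measure (three_point p) A =
    of_bool (0 \<in> A) * p + of_bool (1/2 \<in> A) * (1 - 2*p) + of_bool (1 \<in> A) * p"
  unfolding three_point_def using assms
  by (simp add: measure_distr measure_pmf_of_list[OF pmf_of_list_wf_three_point])

lemma AE_three_point: "AE x in three_point p. x \<in> {0, 1/2, 1}"
  unfolding three_point_def
  using set_pmf_of_list[OF pmf_of_list_wf_three_point] by (auto simp: AE_distr_iff AE_measure_pmf_iff)

lemma symmetric_dist_three_point: "symmetric_dist (three_point p)"
  unfolding symmetric_dist_def
proof (intro conjI ballI)
  show "AE x in three_point p. x \<in> {0..1}"
    using AE_three_point by eventually_elim auto
  fix \<epsilon> :: real assume "\<epsilon> \<in> {0..1/2}"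
  then show "measure (three_point p) {x. x \<le> 1/2 - \<epsilon>} = measure (three_point p) {x. x \<ge> 1/2 + \<epsilon>}"
    by (simp add: measure_three_point)
qed (simp_all add: prob_space_three_point)

lemma AE_samples: "AE t in samples m p. \<forall>j<m. t j \<in> {0, 1/2, 1}"
proof -
  have "\<forall>j\<in>{..<m}. AE t in samples m p. t j \<in> {0, 1/2, 1}"
    using AE_PiM_component[of "{..<m}" "\<lambda>_. three_point p", OF prob_space_three_point _ AE_three_point]
    by auto
  then have "AE t in samples m p. \<forall>j\<in>{..<m}. t j \<in> {0, 1/2, 1}"
    by (subst AE_finite_all) auto
  then show ?thesis
    by auto
qed

lemma AE_kth_largest_values: "AE t in samples m p. \<forall>k<m. kth_largest m k t \<in> {0, 1/2, 1}"
  using AE_samples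
proof eventually_elim
  case (elim t)
  show ?case
  proof (intro allI impI)
    fix k assume "k < m"
    then show "kth_largest m k t \<in> {0, 1/2, 1}" using kth_largest_mem[of k m t] elim by auto
  qed
qed

lemma integrable_kth_largest: "k < m \<Longrightarrow> integrable (samples m p) (kth_largest m k)"
proof -
  interpret prob_space "samples m p" by (rule prob_space_samples)
  show "k < m \<Longrightarrow> ?thesis"
    by (rule integrable_const_bound[where B=1])
      (use AE_kth_largest_values[of m] in \<open>auto elim!: eventually_mono intro: measurable_kth_largest\<close>)
qed

lemma integrable_count_ge: "integrable (samples m p) (\<lambda>t. real (count_ge m c t))"
proof -
  interpret prob_space "samples m p" by (rule prob_space_samples)
  show ?thesis
    by (rule integrable_const_bound[where B=m]) (auto simp: measurable_count_ge count_ge_le intro!: AE_I2)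
qed

lemma order_stat_mean_bounds: "k < m \<Longrightarrow> 0 \<le> order_stat_mean m p k \<and> order_stat_mean m p k \<le> 1"
proof -
  interpret prob_space "samples m p" by (rule prob_space_samples)
  assume k: "k < m"
  have "AE t in samples m p. 0 \<le> kth_largest m k t \<and> kth_largest m k t \<le> 1"
    using AE_kth_largest_values by eventually_elim (use k in auto)
  then show ?thesis
    unfolding order_stat_mean_def
    using integral_mono_AE[of "samples m p" "kth_largest m k" "\<lambda>_. 1"] integrable_kth_largest[OF k]
    by (auto simp: prob_space intro: integral_nonneg_AE elim: eventually_mono)
qed

lemma cylinder_in_sets:
  "C \<subseteq> {..<m} \<Longrightarrow> A \<in> sets borel \<Longrightarrow>
    {t \<in> space (samples m p). \<forall>k\<in>C. t k \<in> A} \<in> sets (samples m p)"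
proof -
  assume C: "C \<subseteq> {..<m}" and A: "A \<in> sets borel"
  have "{t \<in> space (samples m p). \<forall>k\<in>C. t k \<in> A} =
      {t \<in> space (samples m p). \<forall>k\<in>C \<inter> {..<m}. t k \<in> A}"
    using C by auto
  also have "\<dots> \<in> sets (samples m p)"
  proof (intro sets.sets_Collect_finite_All)
    fix k assume "k \<in> C \<inter> {..<m}"
    then have "(\<lambda>t. t k) \<in> measurable (samples m p) (three_point p)"
      by (intro measurable_component_singleton) auto
    then show "{t \<in> space (samples m p). t k \<in> A} \<in> sets (samples m p)"
      using A by (auto intro: measurable_sets_Collect)
  qed auto
  finally show ?thesis .
qed

lemma measure_cylinder:
  "C \<subseteq> {..<m} \<Longrightarrow> A \<in> sets borel \<Longrightarrow>
    measure (samples m p) {t \<in> space (samples m p). \<forall>k\<in>C. t k \<in> A} = measure (three_point p) A ^ card C"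
  by (rule measure_PiM_cylinder) (auto simp: prob_space_three_point)

lemma expectation_count_ge:
  "(\<integral>t. real (count_ge m c t) \<partial>samples m p) = m * measure (three_point p) {x. c \<le> x}"
proof -
  interpret prob_space "samples m p" by (rule prob_space_samples)
  define S where "S j = {t \<in> space (samples m p). \<forall>k\<in>{j}. t k \<in> {x. c \<le> x}}" for j
  have S: "j < m \<Longrightarrow> S j \<in> sets (samples m p)" for j
    unfolding S_def by (rule cylinder_in_sets) auto
  have "(\<integral>t. real (count_ge m c t) \<partial>samples m p) = (\<integral>t. (\<Sum>j<m. indicator (S j) t) \<partial>samples m p)"
    unfolding count_ge_eq_sum by (intro Bochner_Integration.integral_cong sum.cong) (auto simp: S_def)
  also have "\<dots> = (\<Sum>j<m. expectation (indicator (S j)))"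
    using S by (intro Bochner_Integration.integral_sum) (auto simp: emeasure_eq_measure)
  also have "\<dots> = (\<Sum>j<m. prob (S j))"
    using S by simp
  also have "\<dots> = m * measure (three_point p) {x. c \<le> x}"
    using measure_cylinder[of "{_}" m "{x. c \<le> x}"] by (simp add: S_def)
  finally show ?thesis .
qed

lemma order_stat_mean_le_half_plus:
  assumes "k < m"
  shows "order_stat_mean m p k \<le> 1/2 + m * p / (2 * (real k + 1))"
proof -
  interpret prob_space "samples m p" by (rule prob_space_samples)
  have "AE t in samples m p. kth_largest m k t \<le> 1/2 + count_ge m 1 t / (2 * (real k + 1))"
    using AE_samples[of m] by eventually_elim (rule kth_largest_le_half_plus_count[OF assms])
  then have "order_stat_mean m p k \<le> expectation (\<lambda>t. 1/2 + count_ge m 1 t / (2 * (real k + 1)))"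
    unfolding order_stat_mean_def using integrable_kth_largest[OF assms] integrable_count_ge
    by (intro integral_mono_AE) auto
  also have "\<dots> = 1/2 + m * p / (2 * (real k + 1))"
    using integrable_count_ge p
    by (simp add: Bochner_Integration.integral_add expectation_count_ge measure_three_point prob_space)
  finally show ?thesis .
qed

lemma order_stat_mean_ge_half_minus:
  assumes "k < m"
  shows "1/2 - m * p / (2 * (real k + 1)) \<le> order_stat_mean m p (m-1-k)"
proof -
  interpret prob_space "samples m p" by (rule prob_space_samples)
  have "1/2 - m * p / (2 * (real k + 1)) = expectation (\<lambda>t. 1/2 - (real m - count_ge m (1/2) t) / (2 * (real k + 1)))"
    using integrable_count_ge p
    by (simp add: Bochner_Integration.integral_diff expectation_count_ge measure_three_point prob_space
        integrable_divide algebra_simps)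
  also have "\<dots> \<le> order_stat_mean m p (m-1-k)"
  proof -
    have "AE t in samples m p. 1/2 - (real m - count_ge m (1/2) t) / (2 * (real k + 1)) \<le> kth_largest m (m-1-k) t"
      using AE_samples[of m] by eventually_elim (rule kth_largest_ge_half_minus_count[OF assms])
    then show ?thesis
      unfolding order_stat_mean_def using integrable_kth_largest integrable_count_ge assms
      by (intro integral_mono_AE) auto
  qed
  finally show ?thesis .
qed

lemma sum_order_stat_mean: "(\<Sum>k<m. order_stat_mean m p k) = m / 2"
proof -
  interpret prob_space "samples m p" by (rule prob_space_samples)
  have card_below: "card ({..<m} \<inter> {k. k < N}) = N" if "N \<le> m" for N
  proof -
    have "{..<m} \<inter> {k. k < N} = {..<N}" using that by auto
    then show ?thesis by simp
  qed
  have "(\<Sum>k<m. order_stat_mean m p k) = expectation (\<lambda>t. \<Sum>k<m. kth_largest m k t)"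
    unfolding order_stat_mean_def
    by (rule Bochner_Integration.integral_sum[symmetric]) (use integrable_kth_largest in auto)
  also have "\<dots> = expectation (\<lambda>t. count_ge m (1/2) t / 2 + count_ge m 1 t / 2)"
  proof (rule integral_cong_AE)
    show "AE t in samples m p. (\<Sum>k<m. kth_largest m k t) = count_ge m (1/2) t / 2 + count_ge m 1 t / 2"
      using AE_samples[of m]
      by eventually_elim
        (simp add: kth_largest_of_three_values sum.distrib sum_divide_distrib[symmetric] card_below count_ge_le)
  qed (use measurable_count_ge in \<open>auto intro!: borel_measurable_sum measurable_kth_largest\<close>)
  also have "\<dots> = m / 2"
    using integrable_count_ge p by (simp add: expectation_count_ge measure_three_point field_simps)
  finally show ?thesis .
qed

(* A union bound over the K + 1 blocks of L consecutive samples: outside the union every block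
   contains a sample 1, so at least K + 1 samples are 1. *)
lemma order_stat_mean_ge_blocks:
  assumes m: "m = (K+1) * L" and L: "0 < L"
  shows "1 - (real K + 1) * (1-p)^L \<le> order_stat_mean m p K"
proof -
  interpret prob_space "samples m p" by (rule prob_space_samples)
  define E where "E b = {t \<in> space (samples m p). \<forall>j\<in>{b*L..<b*L+L}. t j \<in> {x. x < 1}}" for b
  have E: "E b \<in> events" "prob (E b) = (1-p)^L" if "b < K+1" for b
  proof -
    have block: "{b*L..<b*L+L} \<subseteq> {..<m}" using block_subset[OF that] m by simp
    show "E b \<in> events" unfolding E_def by (rule cylinder_in_sets[OF block]) measurable
    show "prob (E b) = (1-p)^L"
      unfolding E_def using p by (subst measure_cylinder[OF block]) (auto simp: measure_three_point)
  qed
  have "prob (\<Union>b<K+1. E b) \<le> (\<Sum>b<K+1. prob (E b))"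
    using E by (intro finite_measure_subadditive_finite) auto
  also have "\<dots> = (real K + 1) * (1-p)^L" using E by simp
  finally have "1 - (real K + 1) * (1-p)^L \<le> 1 - prob (\<Union>b<K+1. E b)" by simp
  also have "\<dots> \<le> order_stat_mean m p K"
    unfolding order_stat_mean_def
  proof (rule expectation_ge_one_minus_prob)
    have "K \<le> K * L" "m = K * L + L" using L m by simp_all
    then have "K < m" using L by linarith
    then show "integrable (samples m p) (kth_largest m K)" by (rule integrable_kth_largest)
    show "AE t in samples m p. 0 \<le> kth_largest m K t"
      using AE_kth_largest_values[of m] by (rule eventually_mono) (use \<open>K < m\<close> in auto)
    show "AE t in samples m p. t \<notin> (\<Union>b<K+1. E b) \<longrightarrow> 1 \<le> kth_largest m K t"
    proof (rule AE_I2, intro impI)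
      fix t assume t: "t \<in> space (samples m p)" "t \<notin> (\<Union>b<K+1. E b)"
      have "K+1 \<le> count_ge m 1 t"
        unfolding count_ge_def m using t by (intro card_ge_blocks) (auto simp: E_def not_less)
      then show "1 \<le> kth_largest m K t" using kth_largest_ge_iff[OF \<open>K < m\<close>] by simp
    qed
  qed (use E in auto)
  finally show ?thesis .
qed

lemma order_stat_mean_le_blocks:
  assumes m: "m = (K+1) * L" and L: "0 < L"
  shows "order_stat_mean m p (m-1-K) \<le> (real K + 1) * (1-p)^L"
proof -
  interpret prob_space "samples m p" by (rule prob_space_samples)
  define E where "E b = {t \<in> space (samples m p). \<forall>j\<in>{b*L..<b*L+L}. t j \<in> {x. 1/2 \<le> x}}" for b
  have E: "E b \<in> events" "prob (E b) = (1-p)^L" if "b < K+1" for b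
  proof -
    have block: "{b*L..<b*L+L} \<subseteq> {..<m}" using block_subset[OF that] m by simp
    show "E b \<in> events" unfolding E_def by (rule cylinder_in_sets[OF block]) measurable
    show "prob (E b) = (1-p)^L"
      unfolding E_def using p by (subst measure_cylinder[OF block]) (auto simp: measure_three_point)
  qed
  have "K \<le> K * L" "m = K * L + L" using L m by simp_all
  then have K: "K < m" using L by linarith
  have "order_stat_mean m p (m-1-K) \<le> prob (\<Union>b<K+1. E b)"
    unfolding order_stat_mean_def
  proof (rule expectation_le_prob)
    show "integrable (samples m p) (kth_largest m (m-1-K))" using K by (intro integrable_kth_largest) auto
    show "AE t in samples m p. kth_largest m (m-1-K) t \<le> 1"
      using AE_kth_largest_values[of m] by (rule eventually_mono) (use K in \<open>auto dest!: spec[of _ "m-1-K"]\<close>)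
    show "AE t in samples m p. t \<notin> (\<Union>b<K+1. E b) \<longrightarrow> kth_largest m (m-1-K) t \<le> 0"
      using AE_kth_largest_values[of m] AE_space
    proof eventually_elim
      case (elim t)
      show ?case
      proof
        assume "t \<notin> (\<Union>b<K+1. E b)"
        then have "K+1 \<le> card {j. j < m \<and> t j < 1/2}"
          unfolding m using elim by (intro card_ge_blocks) (auto simp: E_def not_le)
        then have "\<not> 1/2 \<le> kth_largest m (m-1-K) t"
          using kth_largest_ge_iff[of "m-1-K" m "1/2" t] count_ge_add_count_less[of m "1/2" t] K by simp
        then show "kth_largest m (m-1-K) t \<le> 0" using elim K by (auto dest!: spec[of _ "m-1-K"])
      qed
    qed
  qed (use E in auto)
  also have "\<dots> \<le> (\<Sum>b<K+1. prob (E b))"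
    using E by (intro finite_measure_subadditive_finite) auto
  also have "\<dots> = (real K + 1) * (1-p)^L" using E by simp
  finally show ?thesis .
qed

lemma integral_voter_kth_largest:
  fixes i n :: nat
  assumes i: "i < n" and k: "k < m"
  shows "integrable (PiM ({..<n} \<times> {..<m}) (\<lambda>_. three_point p)) (\<lambda>s. kth_largest m k (\<lambda>l. s (i, l)))"
    and "(\<integral>s. kth_largest m k (\<lambda>l. s (i, l)) \<partial>PiM ({..<n} \<times> {..<m}) (\<lambda>_. three_point p)) =
      order_stat_mean m p k"
proof -
  let ?S = "PiM ({..<n} \<times> {..<m}) (\<lambda>_. three_point p)"
  define voter :: "(nat \<times> nat \<Rightarrow> real) \<Rightarrow> nat \<Rightarrow> real"
    where "voter s = (\<lambda>l\<in>{..<m}. s (i, l))" for s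
  have voter_eq: "kth_largest m k (\<lambda>l. s (i, l)) = kth_largest m k (voter s)" for s
    unfolding kth_largest_def voter_def by (intro arg_cong[where f="\<lambda>xs. rev (sort xs) ! k"]) auto
  have voter_meas: "voter \<in> measurable ?S (samples m p)"
    unfolding voter_def by (intro measurable_restrict measurable_component_singleton) (use i in auto)
  have distr_voter: "distr ?S (samples m p) voter = samples m p"
    unfolding voter_def
    by (rule distr_PiM_reindex[where f="\<lambda>l. (i, l)", simplified])
      (auto simp: prob_space_three_point inj_on_def i)
  have meas: "kth_largest m k \<in> borel_measurable (samples m p)"
    by (rule measurable_kth_largest) (auto simp: k)
  show "integrable ?S (\<lambda>s. kth_largest m k (\<lambda>l. s (i, l)))"
    unfolding voter_eq using integrable_distr_eq[OF voter_meas meas] integrable_kth_largest[OF k]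
    by (simp add: distr_voter)
  show "(\<integral>s. kth_largest m k (\<lambda>l. s (i, l)) \<partial>?S) = order_stat_mean m p k"
    unfolding voter_eq order_stat_mean_def integral_distr[OF voter_meas meas, symmetric] distr_voter ..
qed

lemma exp_sw_three_point:
  assumes \<sigma>: "valid_profile m \<sigma>" and j: "j < m"
  shows "exp_sw (three_point p) m \<sigma> j = (\<Sum>i<length \<sigma>. order_stat_mean m p (rank_pos (\<sigma>!i) j))"
proof -
  have pos: "rank_pos (\<sigma>!i) j < m" if "i < length \<sigma>" for i
  proof -
    have "distinct (\<sigma>!i)" "set (\<sigma>!i) = {..<m}"
      using \<sigma> that by (auto simp: valid_profile_def)
    then show ?thesis using rank_pos_in_set(1)[of "\<sigma>!i" j] distinct_card[of "\<sigma>!i"] j by auto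
  qed
  have "exp_sw (three_point p) m \<sigma> j =
      (\<integral>s. (\<Sum>i<length \<sigma>. kth_largest m (rank_pos (\<sigma>!i) j) (\<lambda>l. s (i, l)))
        \<partial>PiM ({..<length \<sigma>} \<times> {..<m}) (\<lambda>_. three_point p))"
    by (simp add: exp_sw_def sw_def utility_def kth_largest_def)
  also have "\<dots> = (\<Sum>i<length \<sigma>. order_stat_mean m p (rank_pos (\<sigma>!i) j))"
    using integral_voter_kth_largest[OF _ pos, of _ "length \<sigma>"]
    by (subst Bochner_Integration.integral_sum) auto
  finally show ?thesis .
qed

end

section \<open>The hard profile\<close>

definition insert_at :: "nat \<Rightarrow> 'a \<Rightarrow> 'a list \<Rightarrow> 'a list" where
  "insert_at i x xs = take i xs @ x # drop i xs"

lemma mset_insert_at: "mset (insert_at i x xs) = mset (x # xs)"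
  by (metis append_take_drop_id insert_at_def mset.simps(2) mset_append union_mset_add_mset_right)

lemma length_insert_at: "length (insert_at i x xs) = Suc (length xs)"
  and set_insert_at: "set (insert_at i x xs) = insert x (set xs)"
  and distinct_insert_at: "distinct (insert_at i x xs) \<longleftrightarrow> distinct (x # xs)"
  using mset_insert_at[of i x xs]
  by (metis size_mset mset.simps(2) size_add_mset, metis mset_eq_setD list.simps(15),
      rule mset_eq_imp_distinct_iff)

lemma nth_insert_at:
  "i \<le> length xs \<Longrightarrow> q \<le> length xs \<Longrightarrow>
    insert_at i x xs ! q = (if q < i then xs ! q else if q = i then x else xs ! (q - 1))"
  by (auto simp: insert_at_def nth_append min_def nth_Cons' nth_drop)

lemma insert_at_nth_cancel:
  assumes "length ys = length xs" "i \<le> length xs" "q \<le> length xs" "y \<noteq> x"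
    and "insert_at i x xs ! q = y" "insert_at i x ys ! q = y"
  shows "\<exists>q'<length xs. xs ! q' = y \<and> ys ! q' = y"
proof (cases "q < i")
  case True
  then show ?thesis
    using assms nth_insert_at[of i xs q x] nth_insert_at[of i ys q x] by (intro exI[of _ q]) auto
next
  case False
  then have "i < q" "xs ! (q - 1) = y" "ys ! (q - 1) = y"
    using assms nth_insert_at[of i xs q x] nth_insert_at[of i ys q x] by (auto split: if_splits)
  then show ?thesis using assms(3) by (intro exI[of _ "q - 1"]) auto
qed

definition ranking :: "nat \<Rightarrow> nat \<Rightarrow> nat \<Rightarrow> nat \<Rightarrow> nat list" where
  "ranking m a b r = insert_at a 0 (insert_at b 1 (rotate r [2..<m]))"

context
  fixes m a b :: nat
  assumes m: "2 \<le> m" and a: "a \<le> m - 1" and b: "b \<le> m - 2"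
begin

lemma ranking_valid: "distinct (ranking m a b r)" "set (ranking m a b r) = {..<m}"
  and length_ranking: "length (ranking m a b r) = m"
  using m by (auto simp: ranking_def set_insert_at distinct_insert_at length_insert_at)

lemma rank_pos_ranking_0: "rank_pos (ranking m a b r) 0 = a"
proof -
  have "ranking m a b r ! a = 0"
    unfolding ranking_def using a m by (subst nth_insert_at) (auto simp: length_insert_at)
  then show ?thesis
    using rank_pos_nth[OF ranking_valid(1), of a r] length_ranking a m by simp
qed

lemma rank_pos_ranking_1: "rank_pos (ranking m a b r) 1 = (if b < a then b else b + 1)"
proof -
  have "insert_at b 1 (rotate r [2..<m]) ! b = 1"
    using b m by (subst nth_insert_at) auto
  then have "ranking m a b r ! (if b < a then b else b + 1) = 1"
    unfolding ranking_def using a b m by (subst nth_insert_at) (auto simp: length_insert_at)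
  then show ?thesis
    using rank_pos_nth[OF ranking_valid(1), of "if b < a then b else b + 1" r] length_ranking a b m
    by (auto split: if_splits)
qed

lemma inj_on_rank_pos_ranking_dummy:
  assumes d: "2 \<le> d" "d < m"
  shows "inj_on (\<lambda>r. rank_pos (ranking m a b r) d) {..<m-2}"
proof (rule inj_onI)
  fix r r' assume r: "r \<in> {..<m-2}" "r' \<in> {..<m-2}"
    and eq: "rank_pos (ranking m a b r) d = rank_pos (ranking m a b r') d"
  define q where "q = rank_pos (ranking m a b r) d"
  have "q < m" "ranking m a b r ! q = d"
    using rank_pos_in_set[OF ranking_valid(1), of d] length_ranking ranking_valid(2) d
    unfolding q_def by auto
  moreover have "ranking m a b r' ! q = d"
    using rank_pos_in_set(2)[OF ranking_valid(1), of d r'] ranking_valid(2) d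
    unfolding q_def eq by auto
  ultimately have "\<exists>q'<length (insert_at b 1 (rotate r [2..<m])).
      insert_at b 1 (rotate r [2..<m]) ! q' = d \<and> insert_at b 1 (rotate r' [2..<m]) ! q' = d"
    using a d m by (intro insert_at_nth_cancel[where x=0 and i=a]) (auto simp: ranking_def length_insert_at)
  then obtain q' where "q' \<le> m - 2" "insert_at b 1 (rotate r [2..<m]) ! q' = d"
      "insert_at b 1 (rotate r' [2..<m]) ! q' = d"
    by (auto simp: length_insert_at less_Suc_eq_le)
  then have "\<exists>q''<length (rotate r [2..<m]). rotate r [2..<m] ! q'' = d \<and> rotate r' [2..<m] ! q'' = d"
    using b d m by (intro insert_at_nth_cancel[where x=1 and i=b]) auto
  then obtain q'' where "q'' < m - 2" "rotate r [2..<m] ! q'' = d" "rotate r' [2..<m] ! q'' = d"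
    by auto
  then have "[2..<m] ! ((r + q'') mod (m-2)) = [2..<m] ! ((r' + q'') mod (m-2))"
    by (simp add: nth_rotate)
  then have "(r + q'') mod (m-2) = (r' + q'') mod (m-2)"
    using \<open>q'' < m - 2\<close> by (simp add: nth_eq_iff_index_eq)
  then have "r mod (m-2) = r' mod (m-2)" by (simp add: nat_mod_eq_iff)
  then show "r = r'" using r by simp
qed

lemma sum_rank_pos_ranking_dummy_le:
  fixes c :: "nat \<Rightarrow> real"
  assumes d: "2 \<le> d" "d < m" and c: "\<And>k. k < m \<Longrightarrow> 0 \<le> c k"
  shows "(\<Sum>r<m-2. c (rank_pos (ranking m a b r) d)) \<le> (\<Sum>k<m. c k)"
proof -
  have "(\<Sum>r<m-2. c (rank_pos (ranking m a b r) d)) = sum c ((\<lambda>r. rank_pos (ranking m a b r) d) ` {..<m-2})"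
    using sum.reindex[OF inj_on_rank_pos_ranking_dummy[OF d], of c] by (simp add: comp_def)
  also have "\<dots> \<le> (\<Sum>k<m. c k)"
    using rank_pos_in_set(1)[OF ranking_valid(1), of d] length_ranking ranking_valid(2) d c
    by (intro sum_mono2) auto
  finally show ?thesis .
qed

end

definition ranking_cycle :: "nat \<Rightarrow> nat \<Rightarrow> nat \<Rightarrow> nat list list" where
  "ranking_cycle m a b = map (ranking m a b) [0..<m-2]"

definition hard_profile :: "nat \<Rightarrow> nat \<Rightarrow> nat \<Rightarrow> nat \<Rightarrow> nat \<Rightarrow> nat list list" where
  "hard_profile m K N\<^sub>1 N\<^sub>2 N\<^sub>3 =
     concat (replicate N\<^sub>1 (ranking_cycle m (m-1) 0)) @
     concat (replicate N\<^sub>2 (ranking_cycle m K 0)) @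
     concat (replicate N\<^sub>3 (ranking_cycle m K (m-2-K)))"

lemma sum_nth_eq_sum_list: "(\<Sum>i<length xs. g (xs ! i)) = sum_list (map g xs)"
  by (simp add: sum_list_sum_nth atLeast0LessThan)

lemma sum_list_concat_replicate:
  "sum_list (map g (concat (replicate N xs))) = of_nat N * sum_list (map g xs)"
  by (induction N) (auto simp: algebra_simps)

context
  fixes m K :: nat
  assumes K: "1 \<le> K" "2*K + 2 \<le> m"
begin

lemma valid_hard_profile: "valid_profile m (hard_profile m K N\<^sub>1 N\<^sub>2 N\<^sub>3)"
  using ranking_valid K
  by (auto simp: valid_profile_def hard_profile_def ranking_cycle_def set_replicate_conv_if)

lemma exp_sw_hard_profile:
  assumes p: "0 \<le> p" "p \<le> 1/2" and j: "j < m"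
  defines "S a b \<equiv> \<Sum>r<m-2. order_stat_mean m p (rank_pos (ranking m a b r) j)"
  shows "exp_sw (three_point p) m (hard_profile m K N\<^sub>1 N\<^sub>2 N\<^sub>3) j =
     N\<^sub>1 * S (m-1) 0 + N\<^sub>2 * S K 0 + N\<^sub>3 * S K (m-2-K)"
  unfolding exp_sw_three_point[OF p valid_hard_profile j] S_def
    sum_nth_eq_sum_list[where g="\<lambda>r. order_stat_mean m p (rank_pos r j)"]
  by (simp add: hard_profile_def sum_list_concat_replicate ranking_cycle_def comp_def
      sum_set_upt_conv_sum_list_nat[symmetric] atLeast0LessThan add.assoc)

lemma exp_sw_hard_profile_0:
  assumes "0 \<le> p" "p \<le> 1/2"
  shows "exp_sw (three_point p) m (hard_profile m K N\<^sub>1 N\<^sub>2 N\<^sub>3) 0 =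
     (m-2) * (N\<^sub>1 * order_stat_mean m p (m-1) + (N\<^sub>2 + N\<^sub>3) * order_stat_mean m p K)"
  using K by (simp add: exp_sw_hard_profile[OF assms] rank_pos_ranking_0 algebra_simps)

lemma exp_sw_hard_profile_1:
  assumes "0 \<le> p" "p \<le> 1/2"
  shows "exp_sw (three_point p) m (hard_profile m K N\<^sub>1 N\<^sub>2 N\<^sub>3) 1 =
     (m-2) * ((N\<^sub>1 + N\<^sub>2) * order_stat_mean m p 0 + N\<^sub>3 * order_stat_mean m p (m-1-K))"
proof -
  have "rank_pos (ranking m (m-1) 0 r) 1 = 0" "rank_pos (ranking m K 0 r) 1 = 0"
    "rank_pos (ranking m K (m-2-K) r) 1 = m-1-K" for r
    using rank_pos_ranking_1[of m _ _ r] K by auto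
  moreover have "1 < m" using K by simp
  ultimately show ?thesis
    by (simp add: exp_sw_hard_profile[OF assms] algebra_simps)
qed

lemma exp_sw_hard_profile_dummy_le:
  assumes "0 \<le> p" "p \<le> 1/2" and j: "2 \<le> j" "j < m"
  shows "exp_sw (three_point p) m (hard_profile m K N\<^sub>1 N\<^sub>2 N\<^sub>3) j \<le> (N\<^sub>1 + N\<^sub>2 + N\<^sub>3) * (m / 2)"
proof -
  have "(\<Sum>r<m-2. order_stat_mean m p (rank_pos (ranking m a b r) j)) \<le> m / 2"
    if "a \<le> m - 1" "b \<le> m - 2" for a b
    using sum_rank_pos_ranking_dummy_le[OF _ that j, of "order_stat_mean m p"] K
      order_stat_mean_bounds[OF assms(1,2)] sum_order_stat_mean[OF assms(1,2)] by simp
  then have "exp_sw (three_point p) m (hard_profile m K N\<^sub>1 N\<^sub>2 N\<^sub>3) j \<le>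
      N\<^sub>1 * (m / 2) + N\<^sub>2 * (m / 2) + N\<^sub>3 * (m / 2)"
    unfolding exp_sw_hard_profile[OF assms(1,2) j(2)] using K by (intro add_mono mult_left_mono) auto
  then show ?thesis by (simp only: of_nat_add distrib_right)
qed

end

section \<open>Choice of the parameters\<close>

lemma one_minus_power_le:
  fixes p :: real
  assumes "0 \<le> p" "p \<le> 1"
  shows "(1-p)^n \<le> 1 / (1 + n*p)"
proof -
  have "(1-p)^n * (1 + n*p) \<le> (1-p)^n * (1+p)^n"
    using Bernoulli_inequality[of p n] assms by (intro mult_left_mono) auto
  also have "\<dots> = (1 - p^2)^n" by (simp add: power_mult_distrib[symmetric] algebra_simps power2_eq_square)
  also have "\<dots> \<le> 1" using assms by (intro power_le_one) (auto simp: power_le_one)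
  finally show ?thesis using assms by (simp add: field_simps add_pos_nonneg)
qed

lemma square_mult_half_power_cube_le:
  assumes "1 \<le> T"
  shows "real T^2 * (1/2)^(T^3) \<le> 1 / real T"
proof -
  have "real (T^3) \<le> 2^(T^3)"
    using less_exp[of "T^3"] by (metis of_nat_le_iff of_nat_numeral of_nat_power less_imp_le)
  then show ?thesis using assms by (simp add: field_simps power_one_over power3_eq_cube power2_eq_square)
qed

lemma less_mult_of_scaled_bounds:
  fixes x y M a b \<alpha> :: real
  assumes "x \<le> M * a" "M * b \<le> y" "a < \<alpha> * b" "0 < M" "0 < \<alpha>"
  shows "x < \<alpha> * y"
proof -
  have "x < M * (\<alpha> * b)" using assms(1,3,4) by (meson mult_strict_left_mono order_le_less_trans)
  also have "\<dots> \<le> \<alpha> * y" using assms(2,5) by (simp add: mult.left_commute)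
  finally show ?thesis .
qed

locale hard_instance =
  fixes \<alpha> :: real and d e T :: nat
  assumes alpha_pos: "0 < \<alpha>" and d_less_e: "d < e" and e_le: "e \<le> 2*d" and T: "2 \<le> T"
    and gap_0: "2 * real d / T + real e / 2 < \<alpha> * real d * (3/2 - 2 / T)"
    and gap_1: "real d * (1 + 1 / T) < \<alpha> * real e * (1 - 1 / T)"
    and gap_dummy: "real d < \<alpha> * real e * (1 - 2 / T)"
begin

abbreviation "m \<equiv> T^5"
abbreviation "K \<equiv> T^2 - 1"
abbreviation "\<epsilon> \<equiv> 1 / real T"
abbreviation "q \<equiv> 1 / real T^4"
abbreviation "\<sigma> \<equiv> hard_profile m K (2*d - e) (e - d) d"

lemma K_bounds: "1 \<le> K" "2*K + 2 \<le> m" "K + 1 = T^2" "real K + 1 = real T^2"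
proof -
  have T2: "4 \<le> T^2" using power_mono[OF T, of 2] by simp
  then show "1 \<le> K" "K + 1 = T^2" "real K + 1 = real T^2" by (simp_all add: of_nat_diff)
  have "T^2 * 2 \<le> T^2 * T^3" using power_mono[OF T, of 3] by (intro mult_left_mono) auto
  then show "2*K + 2 \<le> m" using T2 by (simp add: power_add[symmetric])
qed

lemma q_bounds: "0 \<le> q" "q \<le> 1/2" "real m * q = real T"
proof -
  have "(2::real)^4 \<le> real T^4" using T by (intro power_mono) auto
  then show "0 \<le> q" "q \<le> 1/2" by (simp_all add: divide_le_eq)
  show "real m * q = real T" using T by (simp add: field_simps power_add[symmetric] power_eq_if)
qed

lemma order_stat_mean_small_q:
  "order_stat_mean m q (m-1) \<le> \<epsilon>" "1 - \<epsilon> \<le> order_stat_mean m q 0"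
  "order_stat_mean m q K \<le> 1/2 + \<epsilon>" "1/2 - \<epsilon> \<le> order_stat_mean m q (m-1-K)"
proof -
  have m: "m = (0+1) * m" "0 < m" using T by simp_all
  have "(1-q)^m \<le> 1 / (1 + real T)"
    using one_minus_power_le[of q m] q_bounds by simp
  also have "\<dots> \<le> \<epsilon>" using T by (simp add: divide_left_mono)
  finally have "(1-q)^m \<le> \<epsilon>" .
  then show "order_stat_mean m q (m-1) \<le> \<epsilon>" "1 - \<epsilon> \<le> order_stat_mean m q 0"
    using order_stat_mean_le_blocks[OF q_bounds(1,2) m] order_stat_mean_ge_blocks[OF q_bounds(1,2) m] by simp_all
  have "real m * q / (2 * (real K + 1)) \<le> \<epsilon>"
    using q_bounds(3) K_bounds(4) T by (simp add: power2_eq_square field_simps)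
  then show "order_stat_mean m q K \<le> 1/2 + \<epsilon>" "1/2 - \<epsilon> \<le> order_stat_mean m q (m-1-K)"
    using order_stat_mean_le_half_plus[OF q_bounds(1,2), of K m]
      order_stat_mean_ge_half_minus[OF q_bounds(1,2), of K m] K_bounds by simp_all
qed

lemma order_stat_mean_half:
  "1 - \<epsilon> \<le> order_stat_mean m (1/2) K" "order_stat_mean m (1/2) (m-1-K) \<le> \<epsilon>"
proof -
  have m: "m = (K+1) * T^3" "0 < T^3" using K_bounds(3) T by (simp_all flip: power_add)
  have "(real K + 1) * (1 - 1/2)^(T^3) \<le> \<epsilon>"
    using square_mult_half_power_cube_le[of T] K_bounds(4) T by simp
  then show "1 - \<epsilon> \<le> order_stat_mean m (1/2) K" "order_stat_mean m (1/2) (m-1-K) \<le> \<epsilon>"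
    using order_stat_mean_ge_blocks[of "1/2", OF _ _ m] order_stat_mean_le_blocks[of "1/2", OF _ _ m] by simp_all
qed

lemma num_dummies_pos: "0 < real (m-2)"
proof -
  have "2 < m" using K_bounds(1,2) by linarith
  then show ?thesis by (simp only: of_nat_0_less_iff zero_less_diff)
qed

lemma group_sizes: "real (2*d - e) = 2 * real d - real e" "real (e - d) + real d = real e"
  "real (2*d - e) + real (e - d) = real d" "real (2*d - e) + real (e - d) + real d = 2 * real d"
  using d_less_e e_le by (simp_all add: of_nat_diff)

lemma choice_0_not_approx: "exp_sw (three_point q) m \<sigma> 0 < \<alpha> * exp_sw (three_point q) m \<sigma> 1"
proof (rule less_mult_of_scaled_bounds[OF _ _ _ num_dummies_pos alpha_pos])
  note c = order_stat_mean_small_q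
  have "real (2*d - e) * order_stat_mean m q (m-1) + real e * order_stat_mean m q K \<le>
      real (2*d - e) * \<epsilon> + real e * (1/2 + \<epsilon>)"
    using c(1,3) by (intro add_mono mult_left_mono) auto
  also have "\<dots> = 2 * real d * \<epsilon> + real e / 2"
    unfolding group_sizes by (simp add: algebra_simps)
  finally show "exp_sw (three_point q) m \<sigma> 0 \<le> real (m-2) * (2 * real d * \<epsilon> + real e / 2)"
    unfolding exp_sw_hard_profile_0[OF K_bounds(1,2) q_bounds(1,2)] group_sizes(2)
    by (rule mult_left_mono) simp
  have "real d * (1 - \<epsilon>) + real d * (1/2 - \<epsilon>) \<le>
      real d * order_stat_mean m q 0 + real d * order_stat_mean m q (m-1-K)"
    using c(2,4) by (intro add_mono mult_left_mono) auto
  then show "real (m-2) * (real d * (1 - \<epsilon>) + real d * (1/2 - \<epsilon>)) \<le> exp_sw (three_point q) m \<sigma> 1"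
    unfolding exp_sw_hard_profile_1[OF K_bounds(1,2) q_bounds(1,2)] group_sizes(3)
    by (rule mult_left_mono) simp
  show "2 * real d * \<epsilon> + real e / 2 < \<alpha> * (real d * (1 - \<epsilon>) + real d * (1/2 - \<epsilon>))"
    using gap_0 by (simp add: algebra_simps)
qed

lemma choice_1_not_approx: "exp_sw (three_point (1/2)) m \<sigma> 1 < \<alpha> * exp_sw (three_point (1/2)) m \<sigma> 0"
proof (rule less_mult_of_scaled_bounds[OF _ _ _ num_dummies_pos alpha_pos])
  have half: "0 \<le> (1/2::real)" "(1/2::real) \<le> 1/2" by simp_all
  have "real d * order_stat_mean m (1/2) 0 + real d * order_stat_mean m (1/2) (m-1-K) \<le>
      real d * 1 + real d * \<epsilon>"
    using order_stat_mean_half(2) order_stat_mean_bounds[of "1/2" 0 m] T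
    by (intro add_mono mult_left_mono) auto
  then show "exp_sw (three_point (1/2)) m \<sigma> 1 \<le> real (m-2) * (real d * 1 + real d * \<epsilon>)"
    unfolding exp_sw_hard_profile_1[OF K_bounds(1,2) half] group_sizes(3)
    by (intro mult_left_mono) auto
  have "real e * (1 - \<epsilon>) \<le>
      real (2*d - e) * order_stat_mean m (1/2) (m-1) + real e * order_stat_mean m (1/2) K"
    using order_stat_mean_half(1) order_stat_mean_bounds[of "1/2" "m-1" m] K_bounds
    by (intro add_increasing mult_left_mono) auto
  then show "real (m-2) * (real e * (1 - \<epsilon>)) \<le> exp_sw (three_point (1/2)) m \<sigma> 0"
    unfolding exp_sw_hard_profile_0[OF K_bounds(1,2) half] group_sizes(2)
    by (intro mult_left_mono) auto
  show "real d * 1 + real d * \<epsilon> < \<alpha> * (real e * (1 - \<epsilon>))"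
    using gap_1 by (simp add: algebra_simps)
qed

lemma choice_dummy_not_approx:
  assumes j: "2 \<le> j" "j < m"
  shows "exp_sw (three_point (1/2)) m \<sigma> j < \<alpha> * exp_sw (three_point (1/2)) m \<sigma> 0"
proof (rule less_mult_of_scaled_bounds[where M="real m", OF _ _ _ _ alpha_pos])
  have half: "0 \<le> (1/2::real)" "(1/2::real) \<le> 1/2" by simp_all
  show "exp_sw (three_point (1/2)) m \<sigma> j \<le> real m * real d"
    using exp_sw_hard_profile_dummy_le[OF K_bounds(1,2) half j, of "2*d - e" "e - d" d]
    unfolding group_sizes(4) by (simp add: mult.commute)
  have "real m * (real e * (1 - 2 * \<epsilon>)) \<le> real (m-2) * (real e * (1 - \<epsilon>))"
  proof -
    have "real m * \<epsilon> = real T^4" using T by (simp add: field_simps power_eq_if)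
    moreover have "(2::real)^4 \<le> real T^4" using T by (intro power_mono) auto
    ultimately have "2 \<le> real m * \<epsilon>" by simp
    moreover have "2 < m" using K_bounds(1,2) by linarith
    then have "real (m-2) * (1 - \<epsilon>) - real m * (1 - 2 * \<epsilon>) = real m * \<epsilon> + 2 * \<epsilon> - 2"
      by (simp add: of_nat_diff algebra_simps)
    moreover have "0 \<le> \<epsilon>" by simp
    ultimately have "real m * (1 - 2 * \<epsilon>) \<le> real (m-2) * (1 - \<epsilon>)"
      by linarith
    then show ?thesis by (simp add: mult_left_mono mult.left_commute)
  qed
  also have "\<dots> \<le> exp_sw (three_point (1/2)) m \<sigma> 0"
  proof -
    have "real e * (1 - \<epsilon>) \<le>
        real (2*d - e) * order_stat_mean m (1/2) (m-1) + real e * order_stat_mean m (1/2) K"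
      using order_stat_mean_half(1) order_stat_mean_bounds[of "1/2" "m-1" m] K_bounds
      by (intro add_increasing mult_left_mono) auto
    then show ?thesis
      unfolding exp_sw_hard_profile_0[OF K_bounds(1,2) half] group_sizes(2)
      by (intro mult_left_mono) auto
  qed
  finally show "real m * (real e * (1 - 2 * \<epsilon>)) \<le> exp_sw (three_point (1/2)) m \<sigma> 0" .
  show "real d < \<alpha> * (real e * (1 - 2 * \<epsilon>))" using gap_dummy by simp
  show "0 < real m" using T by simp
qed

lemma no_choice_approx:
  assumes j: "j < m"
  shows "\<exists>D. symmetric_dist D \<and> exp_sw D m \<sigma> j < \<alpha> * Max ((\<lambda>k. exp_sw D m \<sigma> k) ` {..<m})"
proof -
  have m: "0 < m" "1 < m" using K_bounds(1,2) by linarith+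
  have "\<exists>D k. symmetric_dist D \<and> k < m \<and> exp_sw D m \<sigma> j < \<alpha> * exp_sw D m \<sigma> k"
  proof -
    have half: "symmetric_dist (three_point (1/2))" by (rule symmetric_dist_three_point) simp_all
    consider "j = 0" | "j = 1" | "2 \<le> j" by linarith
    then show ?thesis
    proof cases
      case 1
      then show ?thesis using choice_0_not_approx symmetric_dist_three_point[OF q_bounds(1,2)] m by blast
    next
      case 2
      then show ?thesis using choice_1_not_approx half m by blast
    next
      case 3
      then show ?thesis using choice_dummy_not_approx[OF 3 j] half m by blast
    qed
  qed
  then obtain D k where D: "symmetric_dist D" "k < m" "exp_sw D m \<sigma> j < \<alpha> * exp_sw D m \<sigma> k"
    by blast
  have "exp_sw D m \<sigma> k \<le> Max ((\<lambda>k. exp_sw D m \<sigma> k) ` {..<m})"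
    using D(2) by (intro Max_ge) auto
  then have "\<alpha> * exp_sw D m \<sigma> k \<le> \<alpha> * Max ((\<lambda>k. exp_sw D m \<sigma> k) ` {..<m})"
    using alpha_pos by (intro mult_left_mono) auto
  then show ?thesis using D(1,3) by force
qed

end

lemma exists_ratio_between:
  fixes \<alpha> :: real
  assumes "sqrt (1/3) < \<alpha>"
  shows "\<exists>d e :: nat. 0 < d \<and> d < e \<and> e \<le> 2*d \<and> real d < \<alpha> * e \<and> real e < 3 * \<alpha> * d"
proof -
  have "0 < sqrt (1/3::real)" by simp
  then have \<alpha>: "0 < \<alpha>" using assms by linarith
  have "sqrt (1/3) ^ 2 < \<alpha> ^ 2" using assms by (intro power_strict_mono) auto
  then have \<alpha>_sq: "1 < 3 * (\<alpha> * \<alpha>)" by (simp add: power2_eq_square)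
  have "1/2 < \<alpha>"
  proof (rule ccontr)
    assume "\<not> 1/2 < \<alpha>"
    then have "\<alpha> * \<alpha> \<le> 1/2 * (1/2)" using \<alpha> by (intro mult_mono) auto
    then show False using \<alpha>_sq by simp
  qed
  moreover have "1/(2*\<alpha>) < 3*\<alpha>/2" using \<alpha> \<alpha>_sq by (simp add: field_simps)
  moreover have "1/(2*\<alpha>) < 1" using \<alpha> \<open>1/2 < \<alpha>\<close> by (simp add: field_simps)
  ultimately have "max (1/(2*\<alpha>)) (1/2) < min (3*\<alpha>/2) 1" by simp
  then obtain r where r: "r \<in> \<rat>" "max (1/(2*\<alpha>)) (1/2) < r" "r < min (3*\<alpha>/2) 1"
    using Rats_dense_in_real by blast
  obtain a b :: int where ab: "0 < b" "r = of_int a / of_int b" using Rats_cases'[OF r(1)] by metis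
  have b: "0 < real_of_int b" using ab by simp
  have "1/2 < of_int a / real_of_int b" "of_int a / real_of_int b < 1"
    "1/(2*\<alpha>) < of_int a / real_of_int b" "of_int a / real_of_int b < 3*\<alpha>/2"
    using r ab by simp_all
  then have ineq: "of_int b < 2 * real_of_int a" "real_of_int a < of_int b"
    "real_of_int b < \<alpha> * (2 * of_int a)" "2 * real_of_int a < 3 * \<alpha> * of_int b"
    using b \<alpha> by (simp_all add: field_simps)
  then have "0 < a" using b by linarith
  define d e where "d = nat b" and "e = 2 * nat a"
  have de: "real d = of_int b" "real e = 2 * of_int a" using ab \<open>0 < a\<close> by (simp_all add: d_def e_def)
  show ?thesis
  proof (intro exI conjI)
    show "0 < d" using ab by (simp add: d_def)
    show "d < e" "e \<le> 2*d" using ineq de by linarith+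
    show "real d < \<alpha> * e" "real e < 3 * \<alpha> * d" unfolding de using ineq by simp_all
  qed
qed

lemma exists_hard_instance:
  assumes "sqrt (1/3) < \<alpha>"
  shows "\<exists>d e T. hard_instance \<alpha> d e T"
proof -
  obtain d e :: nat where de: "0 < d" "d < e" "e \<le> 2*d" "real d < \<alpha> * e" "real e < 3 * \<alpha> * d"
    using exists_ratio_between[OF assms] by blast
  have "0 < \<alpha> * real e" using de(1,4) by (smt (verit) of_nat_0_less_iff)
  then have \<alpha>: "0 < \<alpha>" by (simp add: zero_less_mult_iff)
  have "((\<lambda>T. 2 * real d / T + real e / 2 - \<alpha> * real d * (3/2 - 2 / T)) \<longlongrightarrow>
      0 + real e / 2 - \<alpha> * real d * (3/2 - 0)) sequentially"
    by (intro tendsto_intros)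
  then have "\<forall>\<^sub>F T in sequentially. 2 * real d / T + real e / 2 - \<alpha> * real d * (3/2 - 2 / T) < 0"
    by (rule order_tendstoD(2)) (use de(5) in simp)
  moreover have "((\<lambda>T. real d * (1 + 1 / T) - \<alpha> * real e * (1 - 1 / T)) \<longlongrightarrow>
      real d * (1 + 0) - \<alpha> * real e * (1 - 0)) sequentially"
    by (intro tendsto_intros)
  then have "\<forall>\<^sub>F T in sequentially. real d * (1 + 1 / T) - \<alpha> * real e * (1 - 1 / T) < 0"
    by (rule order_tendstoD(2)) (use de(4) in simp)
  moreover have "((\<lambda>T. real d - \<alpha> * real e * (1 - 2 / T)) \<longlongrightarrow> real d - \<alpha> * real e * (1 - 0)) sequentially"
    by (intro tendsto_intros)
  then have "\<forall>\<^sub>F T in sequentially. real d - \<alpha> * real e * (1 - 2 / T) < 0"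
    by (rule order_tendstoD(2)) (use de(4) in simp)
  ultimately have "\<forall>\<^sub>F T in sequentially. hard_instance \<alpha> d e T"
    using eventually_ge_at_top[of 2]
  proof eventually_elim
    case (elim T)
    then show ?case using de \<alpha> by unfold_locales simp_all
  qed
  then show ?thesis using eventually_happens' sequentially_bot by blast
qed

theorem theorem6:
  fixes \<alpha> :: real
  assumes "\<alpha> > sqrt (1/3)"
  shows "\<not> (\<exists>f :: nat \<Rightarrow> nat list list \<Rightarrow> nat.
            \<forall>m \<sigma>. m \<ge> 1 \<longrightarrow> valid_profile m \<sigma> \<longrightarrow>
              f m \<sigma> < m \<and>
              (\<forall>D. symmetric_dist D \<longrightarrow>
                 exp_sw D m \<sigma> (f m \<sigma>) \<ge> \<alpha> * Max ((\<lambda>j. exp_sw D m \<sigma> j) ` {..<m})))"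
proof -
  obtain d e T where "hard_instance \<alpha> d e T"
    using exists_hard_instance[OF assms] by blast
  then interpret hard_instance \<alpha> d e T .
  have "1 \<le> m" "valid_profile m \<sigma>"
    using K_bounds valid_hard_profile[OF K_bounds(1,2)] by auto
  then show ?thesis
    using no_choice_approx by (meson not_le)
qed

end
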